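(* Assume the setup in the context, with the fine-tuning regime and local smoothness with radius $r\ge 2\sqrt{C}$. Let $0<\epsilon\le 1$ be such that $|\langle\tau_i,\tau_j\rangle|\le\epsilon\|\tau_i\|\|\tau_j\|$ for all $i\neq j$. Fix $i\in[T]$ and $\alpha_i\in[0,1]$, and let $\theta_{\mathrm{Neg},i}=\theta_0-\alpha_i\tau_i$. Then for every $j\in[T]$ with $j\neq i$, $$\mathcal{L}_j(\theta_{\mathrm{Neg},i})-\mathcal{L}_j(\theta_0)\le L_jC\Big(\frac{3}{2}+\epsilon\Big).$$
   Context: Setup: $\theta_0\in\mathbb{R}^d$ is a pretrained parameter vector; $\theta_1,\dots,\theta_T\in\mathbb{R}^d$ are fine-tuned parameters and $\tau_i:=\theta_i-\theta_0$ are task vectors. For each task $i$, $\mathcal{L}_i:\mathbb{R}^d\to\mathbb{R}$ is a differentiable loss (population risk). Norms are Euclidean. Fine-tuning regime: $\nabla\mathcal{L}_i(\theta_i)=0$ for all $i\in[T]$, and there is $C>0$ with $\|\tau_i\|^2\le C$ for all $i$. Local smoothness with radius $r>0$: for each $i$ there is $L_i\ge 0$ such that for all $\theta$ with $\|\theta-\theta_i\|\le r$, $\big|\mathcal{L}_i(\theta)-\mathcal{L}_i(\theta_i)-\langle\theta-\theta_i,\nabla\mathcal{L}_i(\theta_i)\rangle\big|\le\frac{L_i}{2}\|\theta-\theta_i\|^2$. *)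

theory Defs
  imports "HOL-Analysis.Analysis"
begin

end

theory Submission
  imports Defs
begin

text \<open>Both \<open>\<theta>\<^sub>0\<close> and \<open>\<theta>\<^sub>0 - \<alpha> \<tau>\<^sub>i\<close> lie within \<open>2 \<surd>C \<le> r\<close> of the stationary point \<open>\<theta>\<^sub>j\<close>,
  so local smoothness bounds the loss change from \<open>\<theta>\<^sub>j\<close> to each of them by
  \<open>L\<^sub>j/2\<close> times the squared distance. Going \<open>\<theta>\<^sub>0 \<rightarrow> \<theta>\<^sub>j \<rightarrow> \<theta>\<^sub>0 - \<alpha> \<tau>\<^sub>i\<close> therefore costs at most
  \<open>L\<^sub>j/2 (\<parallel>\<tau>\<^sub>j\<parallel>\<^sup>2 + \<parallel>\<alpha> \<tau>\<^sub>i + \<tau>\<^sub>j\<parallel>\<^sup>2)\<close>, and near-orthogonality of \<open>\<tau>\<^sub>i, \<tau>\<^sub>j\<close> gives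
  \<open>\<parallel>\<alpha> \<tau>\<^sub>i + \<tau>\<^sub>j\<parallel>\<^sup>2 \<le> 2 (1 + \<epsilon>) C\<close>.\<close>

lemma local_smooth_stationary_abs_le:
  fixes L :: "'a::real_inner \<Rightarrow> real"
  assumes smooth: "\<And>x. norm (x - p) \<le> r \<Longrightarrow>
      \<bar>L x - L p - inner (x - p) g\<bar> \<le> M / 2 * (norm (x - p))\<^sup>2"
    and "g = 0" and "norm d \<le> r"
  shows "\<bar>L (p - d) - L p\<bar> \<le> M / 2 * (norm d)\<^sup>2"
  using smooth[of "p - d"] assms(2,3) by simp

lemma norm_le_sqrt_of_sq_le: "(norm x)\<^sup>2 \<le> C \<Longrightarrow> norm x \<le> sqrt C"
  using real_le_rsqrt by blast

lemma norm_scaleR_add_le_two_sqrt: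
  fixes a b :: "'a::real_normed_vector"
  assumes "(norm a)\<^sup>2 \<le> C" "(norm b)\<^sup>2 \<le> C" "alpha \<in> {0..1}"
  shows "norm (alpha *\<^sub>R a + b) \<le> 2 * sqrt C"
proof -
  have "alpha * norm a \<le> norm a"
    using assms(3) by (simp add: mult_left_le_one_le)
  then have "norm (alpha *\<^sub>R a) \<le> sqrt C"
    using assms(1,3) norm_le_sqrt_of_sq_le by fastforce
  moreover have "norm b \<le> sqrt C"
    using assms(2) by (rule norm_le_sqrt_of_sq_le)
  ultimately show ?thesis
    using norm_triangle_ineq[of "alpha *\<^sub>R a" b] by linarith
qed

lemma norm_scaleR_add_sq_le_near_orthogonal:
  fixes a b :: "'a::real_inner"
  assumes ab: "\<bar>inner a b\<bar> \<le> eps * norm a * norm b"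
    and a: "(norm a)\<^sup>2 \<le> C" and b: "(norm b)\<^sup>2 \<le> C"
    and eps: "0 \<le> eps" and alpha: "alpha \<in> {0..1}"
  shows "(norm (alpha *\<^sub>R a + b))\<^sup>2 \<le> 2 * (1 + eps) * C"
proof -
  have C: "0 \<le> C"
    using b by (meson order_trans zero_le_power2)
  have "norm a * norm b \<le> sqrt C * sqrt C"
    using a b C by (intro mult_mono norm_le_sqrt_of_sq_le) auto
  also have "\<dots> = C"
    using C by simp
  finally have normab: "norm a * norm b \<le> C" .
  have "alpha * inner a b \<le> alpha * (eps * (norm a * norm b))"
    using ab alpha by (intro mult_left_mono) (auto simp: mult.assoc)
  also have "\<dots> \<le> 1 * (eps * C)"
    using alpha eps normab by (intro mult_mono mult_left_mono) auto
  finally have cross: "alpha * inner a b \<le> eps * C" by simp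
  have "alpha\<^sup>2 * (norm a)\<^sup>2 \<le> 1 * C"
    using a alpha by (intro mult_mono) (auto simp: power_le_one)
  moreover have "(norm (alpha *\<^sub>R a + b))\<^sup>2
      = alpha\<^sup>2 * (norm a)\<^sup>2 + 2 * (alpha * inner a b) + (norm b)\<^sup>2"
    unfolding power2_norm_eq_inner
    by (simp add: algebra_simps inner_commute power2_eq_square)
  ultimately show ?thesis
    using cross b by (simp add: algebra_simps)
qed

theorem mainTheorem7:
  fixes T :: nat
    and theta0 :: "'a::euclidean_space"
    and theta :: "nat \<Rightarrow> 'a"
    and Loss :: "nat \<Rightarrow> 'a \<Rightarrow> real"
    and grad :: "nat \<Rightarrow> 'a \<Rightarrow> 'a"
    and Lsm :: "nat \<Rightarrow> real"
    and C r eps alpha :: real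
    and i j :: nat
  assumes diff: "\<And>k x. k \<in> {1..T} \<Longrightarrow> GDERIV (Loss k) x :> grad k x"
    and stationary: "\<And>k. k \<in> {1..T} \<Longrightarrow> grad k (theta k) = 0"
    and Cpos: "C > 0"
    and taubound: "\<And>k. k \<in> {1..T} \<Longrightarrow> (norm (theta k - theta0))\<^sup>2 \<le> C"
    and rpos: "r > 0"
    and rbig: "r \<ge> 2 * sqrt C"
    and Lsm_nonneg: "\<And>k. k \<in> {1..T} \<Longrightarrow> Lsm k \<ge> 0"
    and smooth: "\<And>k x. k \<in> {1..T} \<Longrightarrow> norm (x - theta k) \<le> r \<Longrightarrow>
        \<bar>Loss k x - Loss k (theta k) - inner (x - theta k) (grad k (theta k))\<bar>
          \<le> Lsm k / 2 * (norm (x - theta k))\<^sup>2"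
    and eps_pos: "0 < eps" and eps_le: "eps \<le> 1"
    and orth: "\<And>k l. k \<in> {1..T} \<Longrightarrow> l \<in> {1..T} \<Longrightarrow> k \<noteq> l \<Longrightarrow>
        \<bar>inner (theta k - theta0) (theta l - theta0)\<bar>
          \<le> eps * norm (theta k - theta0) * norm (theta l - theta0)"
    and i_in: "i \<in> {1..T}"
    and alpha: "alpha \<in> {0..1}"
    and j_in: "j \<in> {1..T}" and ji: "j \<noteq> i"
  shows "Loss j (theta0 - alpha *\<^sub>R (theta i - theta0)) - Loss j theta0
           \<le> Lsm j * C * (3/2 + eps)"
proof -
  define a where "a = theta i - theta0"
  define b where "b = theta j - theta0"
  have a: "(norm a)\<^sup>2 \<le> C" and b: "(norm b)\<^sup>2 \<le> C"
    using taubound i_in j_in by (auto simp: a_def b_def)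
  have local_bound: "\<bar>Loss j (theta j - (beta *\<^sub>R a + b)) - Loss j (theta j)\<bar>
      \<le> Lsm j / 2 * (norm (beta *\<^sub>R a + b))\<^sup>2" if "beta \<in> {0..1}" for beta
  proof (rule local_smooth_stationary_abs_le)
    show "norm (beta *\<^sub>R a + b) \<le> r"
      using norm_scaleR_add_le_two_sqrt[OF a b that] rbig by linarith
  qed (use smooth[OF j_in] stationary[OF j_in] in auto)
  have negated: "theta j - (alpha *\<^sub>R a + b) = theta0 - alpha *\<^sub>R a"
    and pretrained: "theta j - b = theta0"
    by (simp_all add: b_def)
  have zero: "(0::real) \<in> {0..1}"
    by simp
  have "(norm (alpha *\<^sub>R a + b))\<^sup>2 \<le> 2 * (1 + eps) * C"
    using orth[OF i_in j_in ji[symmetric]] a b eps_pos alpha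
    by (intro norm_scaleR_add_sq_le_near_orthogonal) (auto simp: a_def b_def)
  then have "Lsm j / 2 * (norm (alpha *\<^sub>R a + b))\<^sup>2 + Lsm j / 2 * (norm b)\<^sup>2
      \<le> Lsm j / 2 * (2 * (1 + eps) * C) + Lsm j / 2 * C"
    using b Lsm_nonneg[OF j_in] by (intro add_mono mult_left_mono) auto
  moreover note local_bound[OF alpha, unfolded negated]
    and local_bound[of 0, OF zero, unfolded scale_zero_left add_0_left pretrained]
  moreover have "Lsm j / 2 * (2 * (1 + eps) * C) + Lsm j / 2 * C = Lsm j * C * (3/2 + eps)"
    by (simp add: algebra_simps)
  ultimately show ?thesis
    unfolding a_def by linarith
qed

end
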